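(* Let $h,k$ be positive integers with $\gcd(h,k)=1$ and $h+k$ odd. Then $$Y_{1}(h,k)+Y_{1}(k,h)=2(k-1)B_{1}(h,k)+2(h-1)B_{1}(k,h).$$
   Context: $[x]$ denotes the greatest integer $\le x$. For coprime positive integers $a,b$ define $$B_{1}(a,b)=\sum_{j=1}^{b-1}(-1)^{j+\left[\frac{aj}{b}\right]}\left[\frac{aj}{b}\right],\qquad Y_{1}(a,b)=\sum_{j=1}^{b-1}(2j-1)(-1)^{j+\left[\frac{aj}{b}\right]}\left[\frac{aj}{b}\right].$$ *)

theory Defs
  imports Main
begin

text \<open>For positive integers a, b: floor(a*j/b) = (a*j) div b.\<close>

definition B1 :: "int \<Rightarrow> int \<Rightarrow> int" where
  "B1 a b = (\<Sum>j\<in>{1..b-1}. (-1) ^ nat (j + (a*j) div b) * ((a*j) div b))"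

definition Y1 :: "int \<Rightarrow> int \<Rightarrow> int" where
  "Y1 a b = (\<Sum>j\<in>{1..b-1}. (2*j - 1) * (-1) ^ nat (j + (a*j) div b) * ((a*j) div b))"

end

theory Submission
  imports Defs
begin

text \<open>
  Write \<open>\<sigma>(n) = (-1)^n\<close> and \<open>f_j = \<lfloor>aj/b\<rfloor>\<close>. Subtracting \<open>2(b-1)B\<^sub>1(a,b)\<close> from
  \<open>Y\<^sub>1(a,b)\<close> leaves \<open>\<Sum>\<^sub>j (2j-2b+1) \<sigma>(j+f_j) f_j\<close>, and the telescoping identity
  \<open>\<sigma>(f) f = \<Sum>\<^sub>m\<^sub>=\<^sub>1\<^sup>f \<sigma>(m)(2m-1)\<close> turns this into a sum over the lattice points
  \<open>(j,m)\<close> of the rectangle \<open>[1,b-1]\<times>[1,a-1]\<close> lying on or below the diagonal \<open>mb = aj\<close>.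
  Adding the corresponding sum for \<open>(k,h)\<close>, which covers the points above the diagonal,
  gives a sum over the whole rectangle \<open>[1,k-1]\<times>[1,h-1]\<close>. Coprimality keeps lattice
  points off the diagonal, and since \<open>h+k\<close> is odd the point reflection
  \<open>(j,m) \<mapsto> (k-j,h-m)\<close> changes the sign of every summand, so the total vanishes.
\<close>

definition parity_sign :: "int \<Rightarrow> int" where
  "parity_sign n = (if even n then 1 else -1)"

lemma parity_sign_add: "parity_sign (m + n) = parity_sign m * parity_sign n"
  unfolding parity_sign_def by auto

lemma neg_one_power_nat_eq_parity_sign: "n \<ge> 0 \<Longrightarrow> (-1::int) ^ nat n = parity_sign n"
  unfolding parity_sign_def by (simp add: minus_one_power_iff even_nat_iff)

lemma parity_sign_mult_eq_sum:
  assumes "f \<ge> 0"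
  shows "parity_sign f * f = (\<Sum>m\<in>{1..f}. parity_sign m * (2*m - 1))"
proof (induction rule: int_ge_induct [OF assms])
  case 1
  then show ?case by simp
next
  case (2 f)
  have "{1..f+1} = insert (f+1) {1..f}" using "2.hyps" by auto
  then have "(\<Sum>m\<in>{1..f+1}. parity_sign m * (2*m - 1))
      = parity_sign (f+1) * (2*f + 1) + parity_sign f * f"
    using "2.IH" by simp
  also have "\<dots> = parity_sign (f+1) * (f+1)"
    by (simp add: parity_sign_def)
  finally show ?case by simp
qed

lemma mult_le_iff_le_div:
  fixes m n b :: int
  assumes "b > 0"
  shows "m * b \<le> n \<longleftrightarrow> m \<le> n div b"
proof
  assume "m * b \<le> n"
  then have "(m * b) div b \<le> n div b" using assms by (rule zdiv_mono1)
  then show "m \<le> n div b" using assms by simp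
next
  assume "m \<le> n div b"
  then have "m * b \<le> n div b * b" using assms by (simp add: mult_right_mono)
  also have "\<dots> \<le> n" using assms by (simp add: minus_mod_eq_div_mult [symmetric])
  finally show "m * b \<le> n" .
qed

lemma lattice_column_eq:
  fixes a b j :: int
  assumes "a > 0" "0 \<le> j" "j < b"
  shows "{m \<in> {1..a-1}. m * b \<le> a * j} = {1..(a * j) div b}"
proof -
  have "a * j < a * b" using assms by (simp add: mult_strict_left_mono)
  then have bound: "(a * j) div b < a"
    using assms mult_le_iff_le_div[of b a "a * j"] by (simp add: not_le [symmetric])
  have iff: "m * b \<le> a * j \<longleftrightarrow> m \<le> (a * j) div b" for m
    using assms by (simp add: mult_le_iff_le_div)
  show ?thesis
    unfolding iff using bound by (intro set_eqI) (simp only: mem_Collect_eq atLeastAtMost_iff, linarith)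
qed

definition lattice_term :: "int \<Rightarrow> int \<Rightarrow> int \<Rightarrow> int \<Rightarrow> int" where
  "lattice_term a b j m =
     (if m * b \<le> a * j then parity_sign (j + m) * (2*m - 1) * (2*j - 2*b + 1) else 0)"

lemma Y1_minus_B1_eq_sum:
  assumes "a > 0" "b > 0"
  shows "Y1 a b - 2*(b-1) * B1 a b
    = (\<Sum>j\<in>{1..b-1}. (2*j - 2*b + 1) * parity_sign (j + (a*j) div b) * ((a*j) div b))"
proof -
  have "Y1 a b - 2*(b-1) * B1 a b = (\<Sum>j\<in>{1..b-1}. (2*j - 1) * (-1) ^ nat (j + (a*j) div b) * ((a*j) div b)
      - 2*(b-1) * ((-1) ^ nat (j + (a*j) div b) * ((a*j) div b)))"
    unfolding Y1_def B1_def by (simp add: sum_subtractf sum_distrib_left)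
  also have "\<dots> = (\<Sum>j\<in>{1..b-1}. (2*j - 2*b + 1) * parity_sign (j + (a*j) div b) * ((a*j) div b))"
  proof (rule sum.cong)
    fix j assume "j \<in> {1..b-1}"
    then have "j + (a*j) div b \<ge> 0" using assms by (simp add: pos_imp_zdiv_nonneg_iff)
    then show "(2*j - 1) * (-1) ^ nat (j + (a*j) div b) * ((a*j) div b)
        - 2*(b-1) * ((-1) ^ nat (j + (a*j) div b) * ((a*j) div b))
      = (2*j - 2*b + 1) * parity_sign (j + (a*j) div b) * ((a*j) div b)"
      by (simp add: neg_one_power_nat_eq_parity_sign algebra_simps)
  qed simp
  finally show ?thesis .
qed

lemma floor_term_eq_column_sum:
  assumes "a > 0" "0 \<le> j" "j < b"
  shows "(2*j - 2*b + 1) * parity_sign (j + (a*j) div b) * ((a*j) div b)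
    = (\<Sum>m\<in>{1..a-1}. lattice_term a b j m)"
proof -
  define f where "f = (a*j) div b"
  have "f \<ge> 0" using assms by (simp add: f_def pos_imp_zdiv_nonneg_iff)
  have "(\<Sum>m\<in>{1..a-1}. lattice_term a b j m)
      = (\<Sum>m\<in>{m \<in> {1..a-1}. m * b \<le> a * j}.
           parity_sign (j + m) * (2*m - 1) * (2*j - 2*b + 1))"
    unfolding lattice_term_def by (rule sum.inter_filter [symmetric]) simp
  also have "\<dots> = (\<Sum>m\<in>{1..f}. parity_sign j * (2*j - 2*b + 1) * (parity_sign m * (2*m - 1)))"
    unfolding lattice_column_eq[OF assms] f_def
    by (simp add: parity_sign_add mult_ac)
  also have "\<dots> = parity_sign j * (2*j - 2*b + 1) * (parity_sign f * f)"
    by (simp only: sum_distrib_left parity_sign_mult_eq_sum [OF \<open>f \<ge> 0\<close>])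
  also have "\<dots> = (2*j - 2*b + 1) * parity_sign (j + f) * f"
    by (simp add: parity_sign_add)
  finally show ?thesis by (simp add: f_def)
qed

lemma Y1_minus_B1_eq_lattice_sum:
  assumes "a > 0" "b > 0"
  shows "Y1 a b - 2*(b-1) * B1 a b
    = (\<Sum>(j, m)\<in>{1..b-1} \<times> {1..a-1}. lattice_term a b j m)"
  unfolding Y1_minus_B1_eq_sum[OF assms] sum.cartesian_product [symmetric]
  using assms by (intro sum.cong) (simp_all add: floor_term_eq_column_sum)

lemma coprime_mult_neq:
  fixes h k j m :: int
  assumes "coprime h k" "0 < j" "j < k"
  shows "m * k \<noteq> h * j"
proof
  assume "m * k = h * j"
  then have "k dvd h * j" by (metis dvd_triv_right)
  with assms(1) have "k dvd j" by (simp add: coprime_commute coprime_dvd_mult_right_iff)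
  with assms(2,3) show False using zdvd_imp_le by fastforce
qed

lemma lattice_terms_reflect:
  fixes h k j m :: int
  assumes "coprime h k" "odd (h + k)" "0 < j" "j < k"
  shows "lattice_term h k (k-j) (h-m) + lattice_term k h (h-m) (k-j)
    = - (lattice_term h k j m + lattice_term k h m j)"
proof -
  define s where "s = parity_sign (j + m)"
  have sign: "parity_sign (m + j) = s" "parity_sign (k - j + (h - m)) = - s"
    "parity_sign (h - m + (k - j)) = - s"
    unfolding s_def parity_sign_def using assms(2) by (auto simp: add.commute)
  have "m * k < h * j \<or> h * j < m * k"
    using coprime_mult_neq[OF assms(1,3,4), of m] by linarith
  then show ?thesis
  proof
    assume below: "m * k < h * j"
    then have "lattice_term h k (k-j) (h-m) = 0" "lattice_term k h m j = 0"
      by (simp_all add: lattice_term_def algebra_simps)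
    moreover have "lattice_term k h (h-m) (k-j) = - s * (2*(k-j) - 1) * (2*(h-m) - 2*h + 1)"
      using below unfolding lattice_term_def sign by (simp add: algebra_simps)
    moreover have "lattice_term h k j m = s * (2*m - 1) * (2*j - 2*k + 1)"
      using below by (simp add: lattice_term_def s_def)
    ultimately show ?thesis by (simp add: algebra_simps)
  next
    assume above: "h * j < m * k"
    then have "lattice_term k h (h-m) (k-j) = 0" "lattice_term h k j m = 0"
      by (simp_all add: lattice_term_def algebra_simps)
    moreover have "lattice_term h k (k-j) (h-m) = - s * (2*(h-m) - 1) * (2*(k-j) - 2*k + 1)"
      using above unfolding lattice_term_def sign by (simp add: algebra_simps)
    moreover have "lattice_term k h m j = s * (2*j - 1) * (2*m - 2*h + 1)"
      using above unfolding lattice_term_def sign by (simp add: algebra_simps)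
    ultimately show ?thesis by (simp add: algebra_simps)
  qed
qed

lemma sum_eq_zero_if_involution_negates:
  fixes F :: "'b \<Rightarrow> 'a::linordered_ab_group_add"
  assumes "\<And>x. x \<in> R \<Longrightarrow> r x \<in> R" "\<And>x. x \<in> R \<Longrightarrow> r (r x) = x"
    and "\<And>x. x \<in> R \<Longrightarrow> F (r x) = - F x"
  shows "sum F R = 0"
proof -
  have "sum F R = sum (F \<circ> r) R"
    by (rule sum.reindex_bij_witness[where i = r and j = r]) (use assms in auto)
  also have "\<dots> = - sum F R"
    by (simp add: assms(3) sum_negf)
  finally show ?thesis by simp
qed

theorem theorem16:
  fixes h k :: int
  assumes "h > 0" and "k > 0" and "coprime h k" and "odd (h + k)"
  shows "Y1 h k + Y1 k h = 2*(k-1)*B1 h k + 2*(h-1)*B1 k h"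
proof -
  define R where "R = {1..k-1} \<times> {1..h-1}"
  have swapped: "Y1 k h - 2*(h-1) * B1 k h = (\<Sum>(j, m)\<in>R. lattice_term k h m j)"
    unfolding Y1_minus_B1_eq_lattice_sum[OF assms(2,1)] R_def
    by (simp add: sum.cartesian_product [symmetric]) (rule sum.swap)
  have "(\<Sum>(j, m)\<in>R. lattice_term h k j m + lattice_term k h m j) = 0"
    by (rule sum_eq_zero_if_involution_negates[where r = "\<lambda>(j, m). (k-j, h-m)"])
      (auto simp: R_def lattice_terms_reflect[OF assms(3,4)])
  then show ?thesis
    using Y1_minus_B1_eq_lattice_sum[OF assms(1,2)] swapped
    unfolding R_def sum.distrib split_beta by simp
qed

end
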